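(* Let $E^3$ and $O^3$ denote the sets of even-parity and odd-parity 3-bit strings and let $A\subseteq E^3$. For $n\ge1$, let Alice, Bob and Carol hold $X=(x_1,\dots,x_n)$, $Y=(y_1,\dots,y_n)$, $Z=(z_1,\dots,z_n)\in\{0,1\}^n$ under the promise that $x_iy_iz_i\in A\cup O^3$ for all $i$, and let $g_A(X,Y,Z)=\bigoplus_{i=1}^n t_A(x_iy_iz_i)$, where $t_A(w)=1$ if $w\in A$ and $0$ otherwise. Then $g_A$ can be computed by a distributed protocol using only local classical operations, no a priori quantum entanglement, and two classical bits of communication in total, at the end of which Alice knows the value of $g_A(X,Y,Z)$. *)

theory Defs
  imports Main
begin

type_synonym bits3 = "bool \<times> bool \<times> bool"

definition odd_parity :: "bits3 \<Rightarrow> bool" where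
  "odd_parity w = (case w of (a, b, c) \<Rightarrow> (a \<noteq> (b \<noteq> c)))"

definition E3 :: "bits3 set" where "E3 = {w. \<not> odd_parity w}"
definition O3 :: "bits3 set" where "O3 = {w. odd_parity w}"

definition tA :: "bits3 set \<Rightarrow> bits3 \<Rightarrow> bool" where
  "tA A w = (w \<in> A)"

definition gA :: "bits3 set \<Rightarrow> bool list \<Rightarrow> bool list \<Rightarrow> bool list \<Rightarrow> bool" where
  "gA A X Y Z = foldr (\<noteq>) (map (\<lambda>i. tA A (X ! i, Y ! i, Z ! i)) [0..<length X]) False"

text \<open>Deterministic classical communication protocols among parties 0 (Alice), 1 (Bob),
  2 (Carol). A protocol is a list of steps; each step is (sender, receiver, message function).
  The message function computes one bit from the sender's own input and the list of bits the
  sender has received so far (in order). Each step communicates exactly one classical bit,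
  so the total communication is the length of the list.\<close>
type_synonym step = "nat \<times> nat \<times> (bool list \<Rightarrow> bool list \<Rightarrow> bool)"

definition received :: "nat \<Rightarrow> (nat \<times> nat \<times> bool) list \<Rightarrow> bool list" where
  "received p tr = map (\<lambda>(s, r, b). b) (filter (\<lambda>(s, r, b). r = p) tr)"

fun exec :: "step list \<Rightarrow> (nat \<Rightarrow> bool list) \<Rightarrow> (nat \<times> nat \<times> bool) list \<Rightarrow> (nat \<times> nat \<times> bool) list" where
  "exec [] inp tr = tr"
| "exec ((s, r, f) # ps) inp tr = exec ps inp (tr @ [(s, r, f (inp s) (received s tr))])"

definition valid_protocol :: "step list \<Rightarrow> bool" where
  "valid_protocol ps = (\<forall>(s, r, f) \<in> set ps. s < 3 \<and> r < 3 \<and> s \<noteq> r)"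

definition alice_output ::
  "step list \<Rightarrow> (bool list \<Rightarrow> bool list \<Rightarrow> bool) \<Rightarrow> bool list \<Rightarrow> bool list \<Rightarrow> bool list \<Rightarrow> bool" where
  "alice_output ps out X Y Z =
     out X (received 0 (exec ps (\<lambda>p. if p = 0 then X else if p = 1 then Y else Z) []))"

end

theory Submission
  imports Defs
begin

text \<open>On promised inputs every triple is either odd, and then outside \<open>A\<close>, or in \<open>A\<close>, and
  then even; so \<open>t\<^sub>A(x\<^sub>i y\<^sub>i z\<^sub>i) = 1 \<oplus> x\<^sub>i \<oplus> y\<^sub>i \<oplus> z\<^sub>i\<close>. Summing over \<open>i\<close>, \<open>g\<^sub>A\<close> is the
  parity of \<open>n\<close> plus the parities of \<open>X\<close>, \<open>Y\<close> and \<open>Z\<close>. Bob and Carol each send Alice the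
  parity of their string, and Alice adds these to her own parity and to \<open>n mod 2\<close>.\<close>

definition parity :: "bool list \<Rightarrow> bool" where
  "parity xs = foldr (\<noteq>) xs False"

lemma parity_Nil [simp]: "parity [] = False"
  by (simp add: parity_def)

lemma parity_Cons [simp]: "parity (x # xs) = (x \<noteq> parity xs)"
  by (simp add: parity_def)

lemma parity_append [simp]: "parity (xs @ ys) = (parity xs \<noteq> parity ys)"
  by (induction xs) auto

lemma parity_map_upt_even_triple:
  "parity (map (\<lambda>i. \<not> (f i \<noteq> (g i \<noteq> h i))) [0..<n]) =
     (odd n \<noteq> (parity (map f [0..<n]) \<noteq> (parity (map g [0..<n]) \<noteq> parity (map h [0..<n]))))"
  by (induction n) auto

lemma tA_promise:
  assumes "A \<subseteq> E3" and "w \<in> A \<union> O3"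
  shows "tA A w = (\<not> odd_parity w)"
  using assms by (auto simp: tA_def E3_def O3_def)

lemma odd_parity_triple: "odd_parity (x, y, z) = (x \<noteq> (y \<noteq> z))"
  by (simp add: odd_parity_def)

lemma gA_promise:
  assumes "A \<subseteq> E3"
    and "length Y = length X" and "length Z = length X"
    and "\<forall>i < length X. (X ! i, Y ! i, Z ! i) \<in> A \<union> O3"
  shows "gA A X Y Z = (odd (length X) \<noteq> (parity X \<noteq> (parity Y \<noteq> parity Z)))"
proof -
  let ?n = "length X"
  have "gA A X Y Z = parity (map (\<lambda>i. tA A (X ! i, Y ! i, Z ! i)) [0..<?n])"
    by (simp add: gA_def parity_def)
  also have "\<dots> = parity (map (\<lambda>i. \<not> (X ! i \<noteq> (Y ! i \<noteq> Z ! i))) [0..<?n])"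
    using assms by (intro arg_cong[where f = parity] map_cong) (auto simp: tA_promise odd_parity_triple)
  also have "\<dots> = (odd ?n \<noteq> (parity (map ((!) X) [0..<?n]) \<noteq>
      (parity (map ((!) Y) [0..<?n]) \<noteq> parity (map ((!) Z) [0..<?n]))))"
    by (rule parity_map_upt_even_triple)
  finally show ?thesis
    using assms(2,3) map_nth[of Y] map_nth[of Z] by (simp add: map_nth)
qed

definition parity_protocol :: "step list" where
  "parity_protocol = [(1, 0, \<lambda>Y _. parity Y), (2, 0, \<lambda>Z _. parity Z)]"

definition parity_output :: "bool list \<Rightarrow> bool list \<Rightarrow> bool" where
  "parity_output X r = (odd (length X) \<noteq> (parity X \<noteq> (r ! 0 \<noteq> r ! 1)))"

lemma valid_parity_protocol: "valid_protocol parity_protocol"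
  by (simp add: valid_protocol_def parity_protocol_def)

lemma alice_output_parity_protocol:
  "alice_output parity_protocol parity_output X Y Z =
     (odd (length X) \<noteq> (parity X \<noteq> (parity Y \<noteq> parity Z)))"
  by (simp add: alice_output_def parity_protocol_def parity_output_def received_def)

theorem corollary3:
  fixes A :: "bits3 set" and n :: nat
  assumes "A \<subseteq> E3" and "n \<ge> 1"
  shows "\<exists>ps out. valid_protocol ps \<and> length ps = 2 \<and>
           (\<forall>X Y Z. length X = n \<and> length Y = n \<and> length Z = n \<and>
              (\<forall>i<n. (X ! i, Y ! i, Z ! i) \<in> A \<union> O3)
              \<longrightarrow> alice_output ps out X Y Z = gA A X Y Z)"
proof (intro exI conjI allI impI)
  show "valid_protocol parity_protocol"
    by (rule valid_parity_protocol)
  show "length parity_protocol = 2"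
    by (simp add: parity_protocol_def)
  fix X Y Z
  assume "length X = n \<and> length Y = n \<and> length Z = n \<and>
    (\<forall>i<n. (X ! i, Y ! i, Z ! i) \<in> A \<union> O3)"
  then show "alice_output parity_protocol parity_output X Y Z = gA A X Y Z"
    using assms(1) by (simp add: alice_output_parity_protocol gA_promise)
qed

end
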